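(* Let $n=2^k$ with $k\ge 2$ an integer. If an $n\times n$ matrix $\Sigma$ with entries $\pm1$ has vanishing permanent, then the number $\mu(\Sigma)$ of entries of $\Sigma$ equal to $-1$ is even.
   Context: The permanent of $\Sigma=[\sigma_{ij}]$ is $\sum_{\lambda\in\mathrm{Sym}(n)}\sigma_{1,\lambda(1)}\cdots\sigma_{n,\lambda(n)}$. *)

theory Defs
  imports Main "HOL-Combinatorics.Permutations"
begin

definition permanent :: "nat \<Rightarrow> (nat \<Rightarrow> nat \<Rightarrow> int) \<Rightarrow> int" where
  "permanent n A = (\<Sum>p\<in>{p. p permutes {..<n}}. \<Prod>i<n. A i (p i))"

definition mu :: "nat \<Rightarrow> (nat \<Rightarrow> nat \<Rightarrow> int) \<Rightarrow> nat" where
  "mu n A = card {(i, j). i < n \<and> j < n \<and> A i j = -1}"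

end

theory Submission
  imports Defs "HOL-Library.FuncSet"
begin

text \<open>Turning a \<open>-1\<close> entry of a \<open>\<plusminus>1\<close> matrix into \<open>1\<close> lowers the permanent by twice the
  complementary minor. Induction on the size then shows that an \<open>m \<times> m\<close> \<open>\<plusminus>1\<close> matrix with
  \<open>m < 2^(j+1)\<close> has permanent \<open>\<equiv> m!\<close> modulo \<open>2^(m-j)\<close>, and one more round of flips on an
  \<open>n \<times> n\<close> matrix \<open>\<Sigma>\<close>, \<open>n = 2^k\<close>, gives \<open>per \<Sigma> \<equiv> n! - 2 \<mu>(\<Sigma>) (n-1)!\<close> modulo
  \<open>2^(n-k+1)\<close>. As \<open>(n-1)!\<close> is exactly divisible by \<open>2^(n-1-k)\<close> (Legendre's formula),
  \<open>per \<Sigma> = 0\<close> forces \<open>\<mu>(\<Sigma>) \<equiv> 2^(k-1)\<close> modulo \<open>2\<close>.\<close>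

fun popcount :: "nat \<Rightarrow> nat" where
  "popcount n = (if n = 0 then 0 else n mod 2 + popcount (n div 2))"

declare popcount.simps [simp del]

lemma popcount_0 [simp]: "popcount 0 = 0"
  by (simp add: popcount.simps)

lemma popcount_double [simp]: "popcount (2 * n) = popcount n"
  by (cases "n = 0") (simp_all add: popcount.simps [of "2 * n"])

lemma popcount_Suc_double [simp]: "popcount (Suc (2 * n)) = Suc (popcount n)"
  by (simp add: popcount.simps [of "Suc (2 * n)"])

lemma popcount_le: "popcount n \<le> n"
  by (induction n rule: nat_bit_induct) simp_all

lemma popcount_le_if_Suc_less_power: "Suc r < 2 ^ Suc j \<Longrightarrow> popcount r \<le> j"
proof (induction r arbitrary: j rule: nat_bit_induct)
  case zero
  then show ?case by simp
next
  case (even n)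
  then have "Suc n < 2 ^ Suc j" by simp
  with even.IH show ?case by simp
next
  case (odd n)
  then obtain i where "j = Suc i" "Suc n < 2 ^ Suc i"
    by (cases j) simp_all
  with odd.IH show ?case by simp
qed

lemma popcount_power_minus_one: "popcount (2 ^ k - 1) = k"
proof (induction k)
  case (Suc k)
  have "(1::nat) \<le> 2 ^ k"
    by simp
  then have "(2::nat) ^ Suc k - 1 = Suc (2 * (2 ^ k - 1))"
    by (simp only: power_Suc)
  with Suc show ?case by simp
qed simp

lemma fact_double: "fact (2 * m) = (2::int) ^ m * fact m * (\<Prod>i<m. 2 * int i + 1)"
proof (induction m)
  case (Suc m)
  have "fact (2 * Suc m) = (2 * int m + 2) * (2 * int m + 1) * (fact (2 * m) :: int)"
    by (simp add: fact_Suc algebra_simps)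
  also have "\<dots> = 2 ^ Suc m * (int (Suc m) * fact m) * ((\<Prod>i<m. 2 * int i + 1) * (2 * int m + 1))"
    unfolding Suc by (simp add: algebra_simps)
  finally show ?case
    by (simp add: fact_Suc)
qed simp

lemma fact_eq_power_two_times_odd: "\<exists>q. odd q \<and> fact r = (2::int) ^ (r - popcount r) * q"
proof (induction r rule: nat_bit_induct)
  case zero
  show ?case by simp
next
  case (even n)
  then obtain q where q: "odd q" "fact n = (2::int) ^ (n - popcount n) * q"
    by blast
  have "2 * n - popcount (2 * n) = n + (n - popcount n)"
    using popcount_le [of n] by simp
  then have "fact (2 * n) = (2::int) ^ (2 * n - popcount (2 * n)) * (q * (\<Prod>i<n. 2 * int i + 1))"
    unfolding fact_double q(2) by (simp add: power_add ac_simps)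
  moreover have "odd (q * (\<Prod>i<n. 2 * int i + 1))"
    using q(1) by (simp add: even_prod_iff)
  ultimately show ?case by blast
next
  case (odd n)
  then obtain q where q: "odd q" "fact n = (2::int) ^ (n - popcount n) * q"
    by blast
  have "Suc (2 * n) - popcount (Suc (2 * n)) = n + (n - popcount n)"
    using popcount_le [of n] by simp
  then have "fact (Suc (2 * n)) = (2::int) ^ (Suc (2 * n) - popcount (Suc (2 * n)))
      * ((2 * int n + 1) * q * (\<Prod>i<n. 2 * int i + 1))"
    unfolding fact_Suc [of "2 * n"] fact_double q(2) by (simp add: power_add ac_simps)
  moreover have "odd ((2 * int n + 1) * q * (\<Prod>i<n. 2 * int i + 1))"
    using q(1) by (simp add: even_prod_iff)
  ultimately show ?case by blast
qed

lemma power_two_dvd_fact: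
  assumes "Suc r < 2 ^ Suc j"
  shows "(2::int) ^ (r - j) dvd fact r"
proof -
  obtain q where "fact r = (2::int) ^ (r - popcount r) * q"
    using fact_eq_power_two_times_odd by blast
  moreover have "r - j \<le> r - popcount r"
    using popcount_le_if_Suc_less_power [OF assms] by simp
  ultimately show ?thesis
    by (simp add: le_imp_power_dvd)
qed

text \<open>Asking \<open>f\<close> to fix every point outside \<open>R\<close> makes \<open>bijections S S\<close> exactly the
  permutations of \<open>S\<close>.\<close>

definition bijections :: "'a set \<Rightarrow> 'a set \<Rightarrow> ('a \<Rightarrow> 'a) set" where
  "bijections R C = {f. bij_betw f R C \<and> (\<forall>x. x \<notin> R \<longrightarrow> f x = x)}"

definition permanent_on :: "'a set \<Rightarrow> 'a set \<Rightarrow> ('a \<Rightarrow> 'a \<Rightarrow> 'b::comm_semiring_1) \<Rightarrow> 'b" where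
  "permanent_on R C A = (\<Sum>f\<in>bijections R C. \<Prod>i\<in>R. A i (f i))"

lemma bijections_same: "bijections S S = {p. p permutes S}"
  by (auto simp: bijections_def permutes_imp_bij intro: bij_imp_permutes)
    (auto simp: permutes_def)

lemma finite_bijections:
  assumes "finite R" "finite C"
  shows "finite (bijections R C)"
proof (rule finite_subset)
  show "bijections R C \<subseteq> (\<lambda>g x. if x \<in> R then g x else x) ` (R \<rightarrow>\<^sub>E C)"
  proof
    fix f assume f: "f \<in> bijections R C"
    then have "f = (\<lambda>x. if x \<in> R then restrict f R x else x)" "restrict f R \<in> R \<rightarrow>\<^sub>E C"
      by (auto simp: bijections_def bij_betw_def)
    then show "f \<in> (\<lambda>g x. if x \<in> R then g x else x) ` (R \<rightarrow>\<^sub>E C)"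
      by blast
  qed
  show "finite ((\<lambda>g x. if x \<in> R then g x else x) ` (R \<rightarrow>\<^sub>E C))"
    using assms by (simp add: finite_PiE)
qed

lemma fun_upd_in_bijections:
  assumes "i \<in> R" "j \<in> C" "g \<in> bijections (R - {i}) (C - {j})"
  shows "g(i := j) \<in> bijections R C"
proof -
  have g: "bij_betw g (R - {i}) (C - {j})" "\<And>x. x \<notin> R - {i} \<Longrightarrow> g x = x"
    using assms(3) by (auto simp: bijections_def)
  have "bij_betw (g(i := j)) (R - {i}) (C - {j})"
    using g(1) by (rule bij_betw_cong [THEN iffD1, rotated]) auto
  then have "bij_betw (g(i := j)) ((R - {i}) \<union> {i}) ((C - {j}) \<union> {(g(i := j)) i})"
    by (rule notIn_Un_bij_betw3 [THEN iffD1, rotated 2]) auto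
  then show ?thesis
    using assms g(2) by (auto simp: bijections_def insert_absorb)
qed

lemma bijections_fun_upd_self:
  assumes "i \<in> R" "f \<in> bijections R C"
  shows "f i \<in> C" "f(i := i) \<in> bijections (R - {i}) (C - {f i})"
proof -
  have f: "bij_betw f R C" "\<And>x. x \<notin> R \<Longrightarrow> f x = x"
    using assms(2) by (auto simp: bijections_def)
  then show "f i \<in> C"
    using assms(1) by (auto simp: bij_betw_def)
  have "bij_betw f (R - {i}) (C - {f i})"
    using bij_betw_DiffI [OF f(1), of "{i}" "{f i}"] assms(1) f(1)
    by (auto simp: bij_betw_def)
  then have "bij_betw (f(i := i)) (R - {i}) (C - {f i})"
    by (rule bij_betw_cong [THEN iffD1, rotated]) auto
  then show "f(i := i) \<in> bijections (R - {i}) (C - {f i})"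
    using f(2) by (auto simp: bijections_def)
qed

lemma bijections_empty [simp]: "bijections {} {} = {id}"
  by (auto simp: bijections_def)

lemma permanent_on_empty [simp]: "permanent_on {} {} A = 1"
  by (simp add: permanent_on_def)

lemma permanent_on_cong:
  assumes "\<And>x y. x \<in> R \<Longrightarrow> y \<in> C \<Longrightarrow> A x y = B x y"
  shows "permanent_on R C A = permanent_on R C B"
  unfolding permanent_on_def
proof (intro sum.cong prod.cong refl)
  fix f x assume "f \<in> bijections R C" "x \<in> R"
  then show "A x (f x) = B x (f x)"
    by (auto simp: bijections_def bij_betw_def intro: assms)
qed

lemma permanent_on_expand_row:
  assumes "finite R" "finite C" "i \<in> R"
  shows "permanent_on R C A = (\<Sum>j\<in>C. A i j * permanent_on (R - {i}) (C - {j}) A)"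
proof -
  let ?T = "SIGMA j:C. bijections (R - {i}) (C - {j})"
  have "(\<Sum>j\<in>C. A i j * permanent_on (R - {i}) (C - {j}) A)
      = (\<Sum>(j, g)\<in>?T. A i j * (\<Prod>x\<in>R - {i}. A x (g x)))"
    unfolding permanent_on_def sum_distrib_left
    by (rule sum.Sigma) (use assms finite_bijections in auto)
  also have "\<dots> = permanent_on R C A"
    unfolding permanent_on_def
  proof (rule sym, rule sum.reindex_bij_witness [where i = "\<lambda>(j, g). g(i := j)"
        and j = "\<lambda>f. (f i, f(i := i))"], goal_cases)
    case (2 f)
    then show ?case
      using bijections_fun_upd_self [OF assms(3)] by auto
  next
    case (3 p)
    then obtain j g where "p = (j, g)" "g \<in> bijections (R - {i}) (C - {j})"
      by auto
    then show ?case
      by (auto simp: bijections_def)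
  next
    case (4 p)
    then show ?case
      using fun_upd_in_bijections [OF assms(3)] by auto
  next
    case (5 f)
    have "(\<Prod>x\<in>R - {i}. A x (f x)) = (\<Prod>x\<in>R - {i}. A x ((f(i := i)) x))"
      by (rule prod.cong) auto
    then show ?case
      using assms by (simp add: prod.remove)
  qed auto
  finally show ?thesis ..
qed

lemma permanent_on_update_entry:
  fixes A :: "'a \<Rightarrow> 'a \<Rightarrow> 'b::comm_ring_1"
  assumes "finite R" "finite C" "i \<in> R" "j \<in> C"
  shows "permanent_on R C A
    = permanent_on R C (A(i := (A i)(j := c))) + (A i j - c) * permanent_on (R - {i}) (C - {j}) A"
proof -
  let ?B = "A(i := (A i)(j := c))"
  have minors: "permanent_on (R - {i}) (C - {j'}) ?B = permanent_on (R - {i}) (C - {j'}) A" for j'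
    by (rule permanent_on_cong) auto
  let ?rest = "\<Sum>j'\<in>C - {j}. A i j' * permanent_on (R - {i}) (C - {j'}) A"
  have "permanent_on R C A = A i j * permanent_on (R - {i}) (C - {j}) A + ?rest"
    using assms by (simp add: permanent_on_expand_row sum.remove)
  moreover have "permanent_on R C ?B = c * permanent_on (R - {i}) (C - {j}) A + ?rest"
    using assms by (simp add: permanent_on_expand_row [of R C i] sum.remove minors)
  ultimately show ?thesis
    by (simp add: algebra_simps)
qed

lemma permanent_on_all_one:
  assumes "finite R" "finite C" "card R = card C" "\<And>x y. x \<in> R \<Longrightarrow> y \<in> C \<Longrightarrow> A x y = 1"
  shows "permanent_on R C A = fact (card R)"
  using assms
proof (induction "card R" arbitrary: R C)
  case 0
  then show ?case by simp
next
  case (Suc m)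
  then obtain i where i: "i \<in> R"
    by fastforce
  have "permanent_on R C A = (\<Sum>j\<in>C. A i j * permanent_on (R - {i}) (C - {j}) A)"
    using Suc.prems i by (simp add: permanent_on_expand_row)
  also have "\<dots> = (\<Sum>j\<in>C. fact m)"
  proof (rule sum.cong [OF refl])
    fix j assume j: "j \<in> C"
    have "card (R - {i}) = m"
      using Suc.hyps(2) Suc.prems(1) i by simp
    moreover have "permanent_on (R - {i}) (C - {j}) A = fact (card (R - {i}))"
      by (rule Suc.hyps(1)) (use Suc.prems Suc.hyps(2) i j in auto)
    ultimately show "A i j * permanent_on (R - {i}) (C - {j}) A = fact m"
      using Suc.prems(4) i j by simp
  qed
  also have "\<dots> = fact (card R)"
    using Suc.hyps(2) Suc.prems(3) by (metis fact_Suc sum_constant)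
  finally show ?case .
qed

definition sign_matrix_on :: "'a set \<Rightarrow> 'a set \<Rightarrow> ('a \<Rightarrow> 'a \<Rightarrow> int) \<Rightarrow> bool" where
  "sign_matrix_on R C A \<longleftrightarrow> (\<forall>x\<in>R. \<forall>y\<in>C. A x y = 1 \<or> A x y = -1)"

definition negative_entries :: "'a set \<Rightarrow> 'a set \<Rightarrow> ('a \<Rightarrow> 'a \<Rightarrow> int) \<Rightarrow> nat" where
  "negative_entries R C A = card {(x, y). x \<in> R \<and> y \<in> C \<and> A x y = -1}"

lemma power_two_dvd_permanent_on_sign_matrix_step:
  fixes A :: "'a \<Rightarrow> 'a \<Rightarrow> int"
  assumes fin: "finite R" "finite C" and card: "card R = Suc m" "card C = Suc m"
    and sign: "sign_matrix_on R C A"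
    and minors: "\<And>R' C' (B :: 'a \<Rightarrow> 'a \<Rightarrow> int). finite R' \<Longrightarrow> finite C' \<Longrightarrow> card R' = m \<Longrightarrow> card C' = m \<Longrightarrow>
      sign_matrix_on R' C' B \<Longrightarrow> (2::int) ^ e dvd permanent_on R' C' B - fact m"
  shows "(2::int) ^ Suc e dvd
    permanent_on R C A - fact (Suc m) + 2 * int (negative_entries R C A) * fact m"
  using sign
proof (induction "negative_entries R C A" arbitrary: A)
  case 0
  have "finite {(x, y). x \<in> R \<and> y \<in> C \<and> A x y = -1}"
    by (rule finite_subset [of _ "R \<times> C"]) (use fin in auto)
  with 0 have "\<And>x y. x \<in> R \<Longrightarrow> y \<in> C \<Longrightarrow> A x y = 1"
    by (auto simp: negative_entries_def sign_matrix_on_def)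
  then have "permanent_on R C A = fact (card R)"
    using fin card by (intro permanent_on_all_one) simp_all
  with 0 card show ?case by simp
next
  case (Suc c)
  let ?S = "{(x, y). x \<in> R \<and> y \<in> C \<and> A x y = -1}"
  have "?S \<noteq> {}"
    using Suc.hyps(2) unfolding negative_entries_def by force
  then obtain i j where ij: "i \<in> R" "j \<in> C" "A i j = -1"
    by blast
  let ?B = "A(i := (A i)(j := 1))"
  have "finite ?S"
    by (rule finite_subset [of _ "R \<times> C"]) (use fin in auto)
  moreover have "{(x, y). x \<in> R \<and> y \<in> C \<and> ?B x y = -1} = ?S - {(i, j)}"
    by (auto split: if_splits)
  ultimately have "c = negative_entries R C ?B"
    using Suc.hyps(2) ij by (simp add: negative_entries_def)
  moreover have "sign_matrix_on R C ?B"
    using Suc.prems by (auto simp: sign_matrix_on_def)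
  ultimately have B: "(2::int) ^ Suc e dvd permanent_on R C ?B - fact (Suc m) + 2 * int c * fact m"
    using Suc.hyps(1) by simp
  let ?M = "permanent_on (R - {i}) (C - {j}) A"
  have "(2::int) ^ e dvd ?M - fact m"
    by (rule minors) (use fin card ij Suc.prems in \<open>auto simp: sign_matrix_on_def\<close>)
  then have M: "(2::int) ^ Suc e dvd 2 * (?M - fact m)"
    by (simp only: power_Suc mult_dvd_mono dvd_refl)
  have "permanent_on R C A = permanent_on R C ?B - 2 * ?M"
    using permanent_on_update_entry [OF fin ij(1,2), of A 1] ij(3) by simp
  then have split: "permanent_on R C A - fact (Suc m) + 2 * int (Suc c) * fact m
      = (permanent_on R C ?B - fact (Suc m) + 2 * int c * fact m) - 2 * (?M - fact m)"
    by (simp add: algebra_simps)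
  show ?case
    unfolding Suc.hyps(2) [symmetric] split by (rule dvd_diff [OF B M])
qed

lemma power_two_dvd_permanent_on_sign_matrix:
  "m < 2 ^ Suc j \<Longrightarrow> finite R \<Longrightarrow> finite C \<Longrightarrow> card R = m \<Longrightarrow> card C = m \<Longrightarrow>
    sign_matrix_on R C A \<Longrightarrow> (2::int) ^ (m - j) dvd permanent_on R C A - fact m"
proof (induction m arbitrary: R C A)
  case 0
  then show ?case by simp
next
  case (Suc m)
  have step: "(2::int) ^ Suc (m - j) dvd
      permanent_on R C A - fact (Suc m) + 2 * int (negative_entries R C A) * fact m"
    by (rule power_two_dvd_permanent_on_sign_matrix_step [OF Suc.prems(2-6)])
      (use Suc.IH Suc.prems(1) in simp)
  have "(2::int) ^ (m - j) dvd fact m"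
    using Suc.prems(1) by (simp add: power_two_dvd_fact)
  then have "(2::int) ^ Suc (m - j) dvd 2 * int (negative_entries R C A) * fact m"
    by (simp add: mult.assoc mult_dvd_mono)
  from dvd_diff [OF step this] have "(2::int) ^ Suc (m - j) dvd permanent_on R C A - fact (Suc m)"
    by simp
  moreover have "(2::int) ^ (Suc m - j) dvd 2 ^ Suc (m - j)"
    by (rule le_imp_power_dvd) simp
  ultimately show ?case
    using dvd_trans by blast
qed

lemma even_if_power_two_dvd_fact_difference:
  assumes "k \<ge> 2" and n: "n = 2 ^ k"
    and dvd: "(2::int) ^ Suc (n - k) dvd 2 * int l * fact (n - 1) - fact n"
  shows "even l"
proof -
  have "k < n"
    using n by (simp add: less_exp)
  have "popcount (n - 1) = k"
    using n popcount_power_minus_one by simp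
  then obtain q where q: "odd q" "fact (n - 1) = (2::int) ^ (n - 1 - k) * q"
    using fact_eq_power_two_times_odd [of "n - 1"] by auto
  have "fact n = (2::int) ^ k * fact (n - 1)"
    using \<open>k < n\<close> n by (metis Suc_pred' fact_Suc gr_zeroI not_less_zero of_nat_numeral of_nat_power)
  moreover have "(2::int) ^ k = 2 * 2 ^ (k - 1)"
    using \<open>k \<ge> 2\<close> by (simp flip: power_Suc)
  ultimately have "2 * int l * fact (n - 1) - fact n = 2 * 2 ^ (n - 1 - k) * (q * (int l - 2 ^ (k - 1)))"
    using q(2) by (simp add: algebra_simps)
  also have "2 * 2 ^ (n - 1 - k) = (2::int) ^ (n - k)"
    using \<open>k < n\<close> by (simp flip: power_Suc add: Suc_diff_Suc)
  finally have "2 * int l * fact (n - 1) - fact n = (2::int) ^ (n - k) * (q * (int l - 2 ^ (k - 1)))" .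
  with dvd have "even (q * (int l - 2 ^ (k - 1)))"
    by simp
  with q(1) \<open>k \<ge> 2\<close> show ?thesis
    by simp
qed

theorem proposition3p5:
  fixes k n :: nat and \<Sigma> :: "nat \<Rightarrow> nat \<Rightarrow> int"
  assumes "k \<ge> 2" and "n = 2 ^ k"
    and "\<And>i j. i < n \<Longrightarrow> j < n \<Longrightarrow> \<Sigma> i j = 1 \<or> \<Sigma> i j = -1"
    and "permanent n \<Sigma> = 0"
  shows "even (mu n \<Sigma>)"
proof -
  have "k < n"
    using assms(2) by (simp add: less_exp)
  have minors: "(2::int) ^ (n - k) dvd permanent_on R C B - fact (n - 1)"
    if "finite R" "finite C" "card R = n - 1" "card C = n - 1" "sign_matrix_on R C B"
    for R C :: "nat set" and B
    using power_two_dvd_permanent_on_sign_matrix [of "n - 1" "k - 1", OF _ that] assms(1,2) \<open>k < n\<close>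
    by simp
  have "(2::int) ^ Suc (n - k) dvd permanent_on {..<n} {..<n} \<Sigma> - fact (Suc (n - 1))
      + 2 * int (negative_entries {..<n} {..<n} \<Sigma>) * fact (n - 1)"
    using \<open>k < n\<close> assms(3)
    by (intro power_two_dvd_permanent_on_sign_matrix_step minors) (auto simp: sign_matrix_on_def)
  moreover have "permanent_on {..<n} {..<n} \<Sigma> = 0"
    using assms(4) by (simp add: permanent_on_def permanent_def bijections_same)
  moreover have "negative_entries {..<n} {..<n} \<Sigma> = mu n \<Sigma>"
    by (simp add: negative_entries_def mu_def)
  ultimately show ?thesis
    using \<open>k < n\<close> by (intro even_if_power_two_dvd_fact_difference [OF assms(1,2)]) simp
qed

end
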